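(* Let $F:\mathbb{P}^2\to\mathbb{P}^5$ be the morphism $$(x;y;z)\mapsto\big(xyz;\ x(z^2-xy);\ x(xz-y^2);\ y(x^2-yz);\ y(xy-z^2);\ 3xyz-(x^3+y^3+z^3)\big).$$ Then $F$ is an immersion, i.e. its differential is injective on the tangent space at every point of $\mathbb{P}^2$. Moreover, $F$ is injective except that the three points $(1;0;0),(0;1;0),(0;0;1)$ are all mapped to $(0;0;0;0;0;1)$ and the three points $(1;1;1),(\omega;\omega^2;1),(\omega^2;\omega;1)$ are all mapped to $(1;0;0;0;0;0)$, where $\omega$ is a primitive cube root of unity.
   Context: Work over $\mathbb{C}$. This $F$ equals $p\circ\phi_S$, where $p$ is the Plücker embedding of $\mathrm{Gr}(2,\mathbb{C}^4)$ in $\mathbb{P}^5$ and $\phi_S$ is the morphism $\mathbb{P}^2\to\mathrm{Gr}(2,\mathbb{C}^4)$ given by the generating sections of $T_{\mathbb{P}^2}$ which are the images under the Euler surjection $\mathcal{O}(1)^3\to T_{\mathbb{P}^2}$ of $(X,0,0),(0,Y,0),(Y,Z,X),(Z,X,Y)$. *)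

theory Defs
  imports "HOL-Analysis.Analysis"
begin

text \<open>Homogeneous coordinates: a point of P^2 (resp. P^5) is represented by a nonzero
vector of complex^3 (resp. complex^6); two nonzero vectors represent the same point iff
they are proportional.\<close>

definition proj_eq :: "complex ^ 'n \<Rightarrow> complex ^ 'n \<Rightarrow> bool" where
  "proj_eq u v \<longleftrightarrow> (\<exists>c::complex. c \<noteq> 0 \<and> u = c *s v)"

definition Fmap :: "complex ^ 3 \<Rightarrow> complex ^ 6" where
  "Fmap v = (let x = v $ 1; y = v $ 2; z = v $ 3 in
     vector [x*y*z, x*(z^2 - x*y), x*(x*z - y^2), y*(x^2 - y*z), y*(x*y - z^2),
             3*x*y*z - (x^3 + y^3 + z^3)])"

end

theory Submission imports Defs begin

text \<open>
  All local statements (no base points, injectivity of the differential modulo the Euler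
  direction) are ideal-membership identities between the coordinate polynomials of the
  cubic map \<open>F\<close>. For global injectivity, three quadrics in the coordinates of
  \<open>F(w)\<close> return \<open>g\<^sub>k(w) \<cdot> w\<close> for quintics \<open>g\<^sub>k\<close>; so \<open>F(w)\<close>
  determines \<open>w\<close> up to scale unless all \<open>g\<^sub>k(w)\<close> vanish. On that locus the
  middle four coordinates of \<open>F(w)\<close> vanish, and solving those equations leaves exactly
  the coordinate points and the points \<open>(\<omega>\<^sup>2; \<omega>; 1)\<close> with \<open>\<omega>\<^sup>3 = 1\<close>.
\<close>

lemma exhaust_6:
  fixes x :: 6
  shows "x = 1 \<or> x = 2 \<or> x = 3 \<or> x = 4 \<or> x = 5 \<or> x = 6"
proof (induct x)
  case (of_int z)
  then have "z = 0 \<or> z = 1 \<or> z = 2 \<or> z = 3 \<or> z = 4 \<or> z = 5" by fastforce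
  then show ?case by auto
qed

lemma forall_6: "(\<forall>i::6. P i) \<longleftrightarrow> P 1 \<and> P 2 \<and> P 3 \<and> P 4 \<and> P 5 \<and> P 6"
  by (metis exhaust_6)

lemma vector_6 [simp]:
  "(vector [a,b,c,d,e,f] :: 'a::zero^6) $ 1 = a"
  "(vector [a,b,c,d,e,f] :: 'a::zero^6) $ 2 = b"
  "(vector [a,b,c,d,e,f] :: 'a::zero^6) $ 3 = c"
  "(vector [a,b,c,d,e,f] :: 'a::zero^6) $ 4 = d"
  "(vector [a,b,c,d,e,f] :: 'a::zero^6) $ 5 = e"
  "(vector [a,b,c,d,e,f] :: 'a::zero^6) $ 6 = f"
  unfolding vector_def by simp_all

lemma vec_eq_iff_3: "(u::'a^3) = w \<longleftrightarrow> u$1 = w$1 \<and> u$2 = w$2 \<and> u$3 = w$3"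
  by (simp add: vec_eq_iff forall_3)

lemma vec_eq_iff_6:
  "(u::'a^6) = w \<longleftrightarrow> u$1 = w$1 \<and> u$2 = w$2 \<and> u$3 = w$3 \<and> u$4 = w$4 \<and> u$5 = w$5 \<and> u$6 = w$6"
  by (simp add: vec_eq_iff forall_6)

lemma has_derivative_componentwiseI:
  fixes f :: "'a::euclidean_space \<Rightarrow> 'b::real_normed_vector ^ 'n"
  assumes "\<And>i. ((\<lambda>x. f x $ i) has_derivative (\<lambda>h. f' h $ i)) F"
  shows "(f has_derivative f') F"
proof -
  have "linear f'"
    using assms[THEN has_derivative_linear] by (auto simp: linear_iff vec_eq_iff)
  moreover have "((\<lambda>y. \<chi> i. (f y $ i - f (Lim F (\<lambda>x. x)) $ i - f' (y - Lim F (\<lambda>x. x)) $ i) /\<^sub>R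
      norm (y - Lim F (\<lambda>x. x))) \<longlongrightarrow> (\<chi> i. 0)) F"
    using assms by (intro tendsto_vec_lambda) (auto simp: has_derivative_def)
  ultimately show ?thesis
    by (auto simp: has_derivative_def linear_conv_bounded_linear vec_eq_iff zero_vec_def
        elim!: back_subst[where P="\<lambda>g. (g \<longlongrightarrow> _) F"])
qed

lemma proj_eqI: "c \<noteq> 0 \<Longrightarrow> u = c *s v \<Longrightarrow> proj_eq u v"
  unfolding proj_eq_def by blast

lemma proj_eq_sym: "proj_eq u v \<Longrightarrow> proj_eq v (u::complex^'n)"
  unfolding proj_eq_def
  by (metis left_inverse vector_smult_assoc vector_smult_lid inverse_eq_iff_eq inverse_zero)

lemma proj_eq_trans: "proj_eq u v \<Longrightarrow> proj_eq v w \<Longrightarrow> proj_eq u (w::complex^'n)"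
  unfolding proj_eq_def by (metis mult_eq_0_iff vector_smult_assoc)

lemma Fmap_nth [simp]:
  "Fmap v $ 1 = v$1 * v$2 * v$3"
  "Fmap v $ 2 = v$1 * ((v$3)^2 - v$1 * v$2)"
  "Fmap v $ 3 = v$1 * (v$1 * v$3 - (v$2)^2)"
  "Fmap v $ 4 = v$2 * ((v$1)^2 - v$2 * v$3)"
  "Fmap v $ 5 = v$2 * (v$1 * v$2 - (v$3)^2)"
  "Fmap v $ 6 = 3 * v$1 * v$2 * v$3 - ((v$1)^3 + (v$2)^3 + (v$3)^3)"
  unfolding Fmap_def Let_def by simp_all

lemma Fmap_smult: "Fmap (c *s v) = c^3 *s Fmap v"
  by (simp add: vec_eq_iff_6; intro conjI; algebra)

lemma proj_eq_Fmap: "proj_eq u v \<Longrightarrow> proj_eq (Fmap u) (Fmap v)"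
  unfolding proj_eq_def by (metis Fmap_smult power_not_zero)

lemma Fmap_nonzero:
  assumes "v \<noteq> 0"
  shows "Fmap v \<noteq> 0"
proof
  assume "Fmap v = 0"
  then have "v$1 = 0 \<and> v$2 = 0 \<and> v$3 = 0"
    by (simp add: vec_eq_iff_6) (intro conjI; algebra)
  with assms show False by (simp add: vec_eq_iff_3)
qed

definition dFmap :: "complex^3 \<Rightarrow> complex^3 \<Rightarrow> complex^6" where
  "dFmap v h = (let x = v$1; y = v$2; z = v$3; p = h$1; q = h$2; r = h$3 in
    vector [y*z*p + x*z*q + x*y*r,
            (z^2 - 2*x*y)*p - x^2*q + 2*x*z*r,
            (2*x*z - y^2)*p - 2*x*y*q + x^2*r,
            2*x*y*p + (x^2 - 2*y*z)*q - y^2*r,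
            y^2*p + (2*x*y - z^2)*q - 2*y*z*r,
            3*(y*z - x^2)*p + 3*(x*z - y^2)*q + 3*(x*y - z^2)*r])"

lemma dFmap_nth [simp]:
  "dFmap v h $ 1 = v$2 * v$3 * h$1 + v$1 * v$3 * h$2 + v$1 * v$2 * h$3"
  "dFmap v h $ 2 = ((v$3)^2 - 2 * v$1 * v$2) * h$1 - (v$1)^2 * h$2 + 2 * v$1 * v$3 * h$3"
  "dFmap v h $ 3 = (2 * v$1 * v$3 - (v$2)^2) * h$1 - 2 * v$1 * v$2 * h$2 + (v$1)^2 * h$3"
  "dFmap v h $ 4 = 2 * v$1 * v$2 * h$1 + ((v$1)^2 - 2 * v$2 * v$3) * h$2 - (v$2)^2 * h$3"
  "dFmap v h $ 5 = (v$2)^2 * h$1 + (2 * v$1 * v$2 - (v$3)^2) * h$2 - 2 * v$2 * v$3 * h$3"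
  "dFmap v h $ 6 = 3 * (v$2 * v$3 - (v$1)^2) * h$1 + 3 * (v$1 * v$3 - (v$2)^2) * h$2
                   + 3 * (v$1 * v$2 - (v$3)^2) * h$3"
  unfolding dFmap_def Let_def by simp_all

lemma has_derivative_Fmap: "(Fmap has_derivative dFmap v) (at v)"
proof (rule has_derivative_componentwiseI)
  have nth: "((\<lambda>w. w $ i) has_derivative (\<lambda>h. h $ i)) (at v)" for i :: 3
    using bounded_linear_vec_nth by (rule bounded_linear.has_derivative) (rule has_derivative_ident)
  fix i :: 6
  from exhaust_6[of i] show "((\<lambda>x. Fmap x $ i) has_derivative (\<lambda>h. dFmap v h $ i)) (at v)"
    by (elim disjE; simp only: Fmap_nth dFmap_nth;
        auto intro!: derivative_eq_intros nth simp: algebra_simps power2_eq_square power3_eq_cube)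
qed

lemma dFmap_diff_smult: "dFmap v (w - c *s u) = dFmap v w - c *s dFmap v u"
  by (simp add: vec_eq_iff_6 algebra_simps)

lemma dFmap_Euler: "dFmap v v = 3 *s Fmap v"
  by (simp add: vec_eq_iff_6; intro conjI; algebra)

lemma dFmap_eq_0_iff:
  assumes "v \<noteq> 0"
  shows "dFmap v h = 0 \<longleftrightarrow> h = 0"
proof
  assume "dFmap v h = 0"
  then have "v$1 * h$1 = 0 \<and> v$1 * h$2 = 0 \<and> v$1 * h$3 = 0 \<and> v$2 * h$1 = 0 \<and> v$2 * h$2 = 0
    \<and> v$2 * h$3 = 0 \<and> v$3 * h$1 = 0 \<and> v$3 * h$2 = 0 \<and> v$3 * h$3 = 0"
    by (simp add: vec_eq_iff_6) (intro conjI; algebra)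
  moreover from assms have "v$1 \<noteq> 0 \<or> v$2 \<noteq> 0 \<or> v$3 \<noteq> 0" by (simp add: vec_eq_iff_3)
  ultimately show "h = 0" by (auto simp: vec_eq_iff_3)
qed (simp add: vec_eq_iff_6)

lemma Fmap_immersion:
  assumes "v \<noteq> 0" "(Fmap has_derivative D) (at v)" "D w = c *s Fmap v"
  shows "\<exists>c. w = c *s v"
proof -
  have "D = dFmap v" using has_derivative_unique[OF assms(2) has_derivative_Fmap] .
  then have "dFmap v (w - (c/3) *s v) = 0"
    using assms(3) by (simp add: dFmap_diff_smult dFmap_Euler vector_smult_assoc)
  then have "w = (c/3) *s v" using dFmap_eq_0_iff[OF assms(1)] by simp
  then show ?thesis ..
qed

text \<open>Left inverses of \<open>F\<close> up to scale, the \<open>k\<close>-th one valid off the zero set of \<open>g\<^sub>k\<close>.\<close>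

definition Finv1 :: "complex^6 \<Rightarrow> complex^3" where
  "Finv1 a = vector [-(a$2 * a$4), a$4 * a$5, (a$5)^2 + a$3 * a$5]"

definition Finv2 :: "complex^6 \<Rightarrow> complex^3" where
  "Finv2 a = vector [a$3 * a$5 + (a$3)^2, (a$4)^2 + a$2 * a$4,
                     a$4 * a$5 + a$3 * a$4 + a$2 * a$5 + a$2 * a$3]"

definition Finv3 :: "complex^6 \<Rightarrow> complex^3" where
  "Finv3 a = vector [a$2 * a$3, -(a$3 * a$5), a$2 * a$4 + (a$2)^2]"

definition g1 :: "complex^3 \<Rightarrow> complex" where
  "g1 w = (let x = w$1; y = w$2; z = w$3 in -(x^2*y*z^2) + y^2*z^3 + x^3*y^2 - x*y^3*z)"

definition g2 :: "complex^3 \<Rightarrow> complex" where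
  "g2 w = (let x = w$1; y = w$2; z = w$3 in -(x^2*y^2*z) - x*y*z^3 + y^3*z^2 + x^3*z^2)"

definition g3 :: "complex^3 \<Rightarrow> complex" where
  "g3 w = (let x = w$1; y = w$2; z = w$3 in x^2*z^3 - x*y^2*z^2 - x^3*y*z + x^2*y^3)"

lemma Finv1_Fmap: "Finv1 (Fmap w) = g1 w *s w"
  by (simp add: vec_eq_iff_3 Finv1_def g1_def Let_def; intro conjI; algebra)

lemma Finv2_Fmap: "Finv2 (Fmap w) = g2 w *s w"
  by (simp add: vec_eq_iff_3 Finv2_def g2_def Let_def; intro conjI; algebra)

lemma Finv3_Fmap: "Finv3 (Fmap w) = g3 w *s w"
  by (simp add: vec_eq_iff_3 Finv3_def g3_def Let_def; intro conjI; algebra)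

lemma Finv1_smult: "Finv1 (c *s a) = c^2 *s Finv1 a"
  by (simp add: vec_eq_iff_3 Finv1_def; intro conjI; algebra)

lemma Finv2_smult: "Finv2 (c *s a) = c^2 *s Finv2 a"
  by (simp add: vec_eq_iff_3 Finv2_def; intro conjI; algebra)

lemma Finv3_smult: "Finv3 (c *s a) = c^2 *s Finv3 a"
  by (simp add: vec_eq_iff_3 Finv3_def; intro conjI; algebra)

lemma proj_eq_of_quadratic_left_inverse:
  fixes P :: "complex^6 \<Rightarrow> complex^3" and g :: "complex^3 \<Rightarrow> complex"
  assumes P_Fmap: "\<And>w. P (Fmap w) = g w *s w" and P_smult: "\<And>a c. P (c *s a) = c^2 *s P a"
    and eq: "Fmap u = c *s Fmap v" and "c \<noteq> 0" "g v \<noteq> 0" "v \<noteq> 0"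
  shows "proj_eq u v"
proof -
  have uv: "g u *s u = (c^2 * g v) *s v"
    using P_Fmap[of u] P_Fmap[of v] P_smult[of c "Fmap v"] eq by (simp add: vector_smult_assoc)
  moreover have "(c^2 * g v) *s v \<noteq> 0" using assms(4-6) by (simp add: vec_eq_iff)
  ultimately have "g u \<noteq> 0" by auto
  then have "u = inverse (g u) *s (g u *s u)" by (simp add: vector_smult_assoc)
  also have "\<dots> = (inverse (g u) * (c^2 * g v)) *s v" by (simp add: uv vector_smult_assoc)
  finally show ?thesis
    using assms(4,5) \<open>g u \<noteq> 0\<close> by (intro proj_eqI[of "inverse (g u) * (c^2 * g v)"]) simp_all
qed

lemma Fmap_middle_zero_if_g_zero:
  assumes "g1 v = 0" "g2 v = 0" "g3 v = 0"
  shows "Fmap v $ 2 = 0" "Fmap v $ 3 = 0" "Fmap v $ 4 = 0" "Fmap v $ 5 = 0"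
    and "Fmap v $ 1 = 0 \<or> Fmap v $ 6 = 0"
  using assms unfolding g1_def g2_def g3_def Let_def Fmap_nth mult_eq_0_iff[symmetric]
  by algebra+

definition coordinate_points :: "(complex^3) set" where
  "coordinate_points = {u. proj_eq u (vector [1,0,0]) \<or> proj_eq u (vector [0,1,0])
                         \<or> proj_eq u (vector [0,0,1])}"

lemma Fmap_coordinate_points:
  assumes "u \<in> coordinate_points"
  shows "proj_eq (Fmap u) (vector [0,0,0,0,0,1])"
proof -
  have "proj_eq (Fmap p) (vector [0,0,0,0,0,1])"
    if "p \<in> {vector [1,0,0], vector [0,1,0], vector [0,0,1]}" for p
    using that by (auto intro!: proj_eqI[of "-1"] simp: vec_eq_iff_6)
  with assms show ?thesis
    unfolding coordinate_points_def by (blast intro: proj_eq_trans proj_eq_Fmap)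
qed

lemma coordinate_pointsI:
  assumes "v \<noteq> 0" "Fmap v $ 1 = 0" "Fmap v $ 2 = 0" "Fmap v $ 3 = 0" "Fmap v $ 4 = 0"
    "Fmap v $ 5 = 0"
  shows "v \<in> coordinate_points"
proof -
  have zero: "v$1 * v$2 = 0 \<and> v$2 * v$3 = 0 \<and> v$1 * v$3 = 0"
    using assms(2-6) unfolding Fmap_nth by - (intro conjI; algebra)
  from assms(1) consider "v$1 \<noteq> 0" | "v$2 \<noteq> 0" | "v$3 \<noteq> 0" by (auto simp: vec_eq_iff_3)
  then show ?thesis
  proof cases
    case 1
    with zero have "v = v$1 *s vector [1,0,0]" by (simp add: vec_eq_iff_3)
    with 1 show ?thesis unfolding coordinate_points_def by (blast intro: proj_eqI)
  next
    case 2
    with zero have "v = v$2 *s vector [0,1,0]" by (simp add: vec_eq_iff_3)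
    with 2 show ?thesis unfolding coordinate_points_def by (blast intro: proj_eqI)
  next
    case 3
    with zero have "v = v$3 *s vector [0,0,1]" by (simp add: vec_eq_iff_3)
    with 3 show ?thesis unfolding coordinate_points_def by (blast intro: proj_eqI)
  qed
qed

definition cube_root_points :: "complex \<Rightarrow> (complex^3) set" where
  "cube_root_points \<omega> = {u. proj_eq u (vector [1,1,1]) \<or> proj_eq u (vector [\<omega>,\<omega>^2,1])
                      \<or> proj_eq u (vector [\<omega>^2,\<omega>,1])}"

lemma cube_eq_1_iff:
  fixes \<omega> b :: "'a::idom"
  assumes "\<omega>^2 + \<omega> + 1 = 0"
  shows "b^3 = 1 \<longleftrightarrow> b = 1 \<or> b = \<omega> \<or> b = \<omega>^2"
proof -
  have "b^3 - 1 = (b - 1) * (b - \<omega>) * (b - \<omega>^2)" using assms by algebra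
  then show ?thesis by auto
qed

lemma cube_root_points_iff:
  assumes "\<omega>^2 + \<omega> + 1 = 0"
  shows "u \<in> cube_root_points \<omega> \<longleftrightarrow> (\<exists>b. b^3 = 1 \<and> proj_eq u (vector [b^2, b, 1]))"
proof -
  have w: "\<omega>^3 = 1" "(\<omega>^2)^3 = 1" "(\<omega>^2)^2 = \<omega>" using assms by algebra+
  show ?thesis
  proof
    assume "u \<in> cube_root_points \<omega>"
    then consider "proj_eq u (vector [1^2,1,1])" | "proj_eq u (vector [(\<omega>^2)^2,\<omega>^2,1])"
      | "proj_eq u (vector [\<omega>^2,\<omega>,1])"
      unfolding cube_root_points_def w(3) by auto
    then show "\<exists>b. b^3 = 1 \<and> proj_eq u (vector [b^2, b, 1])"
      by cases (use w in \<open>blast intro: power_one\<close>)+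
  next
    assume "\<exists>b. b^3 = 1 \<and> proj_eq u (vector [b^2, b, 1])"
    then obtain b where "b \<in> {1, \<omega>, \<omega>^2}" "proj_eq u (vector [b^2, b, 1])"
      using cube_eq_1_iff[OF assms] by blast
    then show "u \<in> cube_root_points \<omega>"
      unfolding cube_root_points_def using w(3) by auto
  qed
qed

lemma Fmap_cube_root_point:
  fixes b :: complex
  assumes "b^3 = 1"
  shows "Fmap (vector [b^2, b, 1]) = vector [1,0,0,0,0,0]"
proof -
  have "b^2 * b = 1" "b^4 = b" "b^6 = 1" using assms by algebra+
  with assms show ?thesis by (simp add: vec_eq_iff_6 flip: power_add power_mult)
qed

lemma Fmap_cube_root_points:
  assumes "\<omega>^2 + \<omega> + 1 = 0" "u \<in> cube_root_points \<omega>"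
  shows "proj_eq (Fmap u) (vector [1,0,0,0,0,0])"
proof -
  from assms obtain b where "b^3 = 1" "proj_eq u (vector [b^2, b, 1])"
    using cube_root_points_iff by blast
  then show ?thesis
    using Fmap_cube_root_point proj_eq_Fmap proj_eq_trans proj_eqI[of 1] by fastforce
qed

lemma cube_root_pointsI:
  assumes omega: "\<omega>^2 + \<omega> + 1 = 0"
    and "v \<noteq> 0" "Fmap v $ 2 = 0" "Fmap v $ 3 = 0" "Fmap v $ 4 = 0" "Fmap v $ 5 = 0"
    "Fmap v $ 6 = 0"
  shows "v \<in> cube_root_points \<omega>"
proof -
  define x y z where "x = v$1" "y = v$2" "z = v$3"
  have "Fmap v $ 1 \<noteq> 0"
    using Fmap_nonzero[OF assms(2)] assms(3-7) by (auto simp: vec_eq_iff_6)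
  then have "x \<noteq> 0" "y \<noteq> 0" "z \<noteq> 0" by (auto simp: x_y_z_def)
  have "z^2 = x*y" "x*z = y^2" using assms(3,4) \<open>x \<noteq> 0\<close> by (auto simp: x_y_z_def)
  define b where "b = y / z"
  have x: "x = b^2 * z"
    using \<open>x*z = y^2\<close> \<open>z \<noteq> 0\<close> by (simp add: b_def field_simps power2_eq_square)
  have "b^3 = 1"
    using \<open>z^2 = x*y\<close> x \<open>y \<noteq> 0\<close> \<open>z \<noteq> 0\<close>
    by (simp add: b_def field_simps power2_eq_square power3_eq_cube)
  moreover have "v = z *s vector [b^2, b, 1]"
    using x \<open>z \<noteq> 0\<close> by (simp add: vec_eq_iff_3 x_y_z_def b_def)
  ultimately show ?thesis
    using \<open>z \<noteq> 0\<close> cube_root_points_iff[OF omega] by (blast intro: proj_eqI)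
qed

lemma proj_eq_Fmap_iff:
  assumes omega: "\<omega>^2 + \<omega> + 1 = 0" and "u \<noteq> 0" "v \<noteq> 0"
  shows "proj_eq (Fmap u) (Fmap v) \<longleftrightarrow> proj_eq u v
    \<or> (u \<in> coordinate_points \<and> v \<in> coordinate_points) \<or> (u \<in> cube_root_points \<omega> \<and> v \<in> cube_root_points \<omega>)"
    (is "_ \<longleftrightarrow> ?rhs")
proof
  assume ?rhs
  then consider "proj_eq u v" | "u \<in> coordinate_points" "v \<in> coordinate_points"
    | "u \<in> cube_root_points \<omega>" "v \<in> cube_root_points \<omega>"
    by blast
  then show "proj_eq (Fmap u) (Fmap v)"
  proof cases
    case 1
    then show ?thesis by (rule proj_eq_Fmap)
  next
    case 2
    then show ?thesis
      using Fmap_coordinate_points by (blast intro: proj_eq_trans proj_eq_sym)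
  next
    case 3
    then show ?thesis
      using Fmap_cube_root_points[OF omega] by (blast intro: proj_eq_trans proj_eq_sym)
  qed
next
  assume "proj_eq (Fmap u) (Fmap v)"
  then obtain c where "c \<noteq> 0" and eq: "Fmap u = c *s Fmap v" unfolding proj_eq_def by blast
  then have same_zeros: "Fmap u $ i = 0 \<longleftrightarrow> Fmap v $ i = 0" for i
    by (simp del: Fmap_nth)
  consider "g1 v \<noteq> 0" | "g2 v \<noteq> 0" | "g3 v \<noteq> 0" | "g1 v = 0" "g2 v = 0" "g3 v = 0"
    by blast
  then show ?rhs
  proof cases
    case 1
    show ?thesis
      using proj_eq_of_quadratic_left_inverse[OF Finv1_Fmap Finv1_smult eq \<open>c \<noteq> 0\<close> 1 \<open>v \<noteq> 0\<close>] ..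
  next
    case 2
    show ?thesis
      using proj_eq_of_quadratic_left_inverse[OF Finv2_Fmap Finv2_smult eq \<open>c \<noteq> 0\<close> 2 \<open>v \<noteq> 0\<close>] ..
  next
    case 3
    show ?thesis
      using proj_eq_of_quadratic_left_inverse[OF Finv3_Fmap Finv3_smult eq \<open>c \<noteq> 0\<close> 3 \<open>v \<noteq> 0\<close>] ..
  next
    case 4
    note middle_v = Fmap_middle_zero_if_g_zero(1-4)[OF 4]
    have middle_u: "Fmap u $ 2 = 0" "Fmap u $ 3 = 0" "Fmap u $ 4 = 0" "Fmap u $ 5 = 0"
      using middle_v by (simp_all only: same_zeros)
    from Fmap_middle_zero_if_g_zero(5)[OF 4] show ?thesis
    proof
      assume "Fmap v $ 1 = 0"
      moreover from this have "Fmap u $ 1 = 0" by (simp only: same_zeros)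
      ultimately show ?thesis
        using coordinate_pointsI[OF \<open>u \<noteq> 0\<close> _ middle_u] coordinate_pointsI[OF \<open>v \<noteq> 0\<close> _ middle_v]
        by blast
    next
      assume "Fmap v $ 6 = 0"
      moreover from this have "Fmap u $ 6 = 0" by (simp only: same_zeros)
      ultimately show ?thesis
        using cube_root_pointsI[OF omega \<open>u \<noteq> 0\<close> middle_u] cube_root_pointsI[OF omega \<open>v \<noteq> 0\<close> middle_v]
        by blast
    qed
  qed
qed

theorem lemma5:
  fixes \<omega> :: complex
  assumes omega: "\<omega>^2 + \<omega> + 1 = 0"
  defines "A \<equiv> {u. proj_eq u (vector [1,0,0]) \<or> proj_eq u (vector [0,1,0])
                   \<or> proj_eq u (vector [0,0,1])}"
      and "B \<equiv> {u. proj_eq u (vector [1,1,1]) \<or> proj_eq u (vector [\<omega>,\<omega>^2,1])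
                   \<or> proj_eq u (vector [\<omega>^2,\<omega>,1])}"
  shows
    \<comment> \<open>F is a morphism: no base points\<close>
    "(\<forall>v::complex^3. v \<noteq> 0 \<longrightarrow> Fmap v \<noteq> 0)
     \<comment> \<open>F is an immersion: the induced map C^3/Cv -> C^6/C F(v) of tangent spaces is injective\<close>
   \<and> (\<forall>v::complex^3. v \<noteq> 0 \<longrightarrow> Fmap differentiable (at v) \<and>
        (\<forall>D w. (Fmap has_derivative D) (at v) \<longrightarrow> (\<exists>c. D w = c *s Fmap v)
               \<longrightarrow> (\<exists>c. w = c *s v)))
     \<comment> \<open>the exceptional images\<close>
   \<and> (\<forall>u\<in>A. proj_eq (Fmap u) (vector [0,0,0,0,0,1]))
   \<and> (\<forall>u\<in>B. proj_eq (Fmap u) (vector [1,0,0,0,0,0]))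
     \<comment> \<open>injectivity away from these identifications\<close>
   \<and> (\<forall>u v::complex^3. u \<noteq> 0 \<longrightarrow> v \<noteq> 0 \<longrightarrow>
        (proj_eq (Fmap u) (Fmap v) \<longleftrightarrow>
          (proj_eq u v \<or> (u \<in> A \<and> v \<in> A) \<or> (u \<in> B \<and> v \<in> B))))"
proof -
  have A: "A = coordinate_points" and B: "B = cube_root_points \<omega>"
    unfolding A_def B_def coordinate_points_def cube_root_points_def by (rule refl)+
  show ?thesis
    unfolding A B
    using Fmap_nonzero has_derivative_Fmap Fmap_immersion Fmap_coordinate_points
      Fmap_cube_root_points[OF omega] proj_eq_Fmap_iff[OF omega]
    unfolding differentiable_def by blast
qed

end
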